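(* Let $d\ge1$ and $f(\rho)=K\ast\rho$ with $\sup_\xi(1+|\xi|^2)|\widehat K(\xi)|<\infty$ if $d\le2$ and $\sup_\xi|\xi|^2|\widehat K(\xi)|<\infty$ if $d\ge3$. Let $s\ge0$. There exists $C$ such that $$\|\nabla f(\rho)\|_{H^{s+1}(\mathbb R^d)}\le C\big(\|\rho\|_{H^s(\mathbb R^d)}+\|\rho\|_{L^1(\mathbb R^d)}\big)\quad\forall\rho\in H^s(\mathbb R^d)\cap L^1(\mathbb R^d).$$ If in addition $s>d/2$, there exists $C$ such that $\|f(\rho)\|_{L^\infty(\mathbb R^d)}\le C(\|\rho\|_{H^s}+\|\rho\|_{L^1})$ for all $\rho\in H^s(\mathbb R^d)\cap L^1(\mathbb R^d)$.
   Context: $\widehat K(\xi)=(2\pi)^{-d/2}\int e^{-ix\cdot\xi}K(x)dx$; $f(\rho)$ is defined by $\widehat{f(\rho)}=(2\pi)^{d/2}\widehat K\widehat\rho$. *)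

theory Defs
  imports "HOL-Probability.Probability"
begin

definition fourier :: "(real^'n::finite \<Rightarrow> complex) \<Rightarrow> real^'n \<Rightarrow> complex" where
  "fourier g \<xi> = complex_of_real ((2*pi) powr (- real CARD('n) / 2)) *
      (LINT x|lborel. cis (- (x \<bullet> \<xi>)) * g x)"

definition inv_fourier :: "(real^'n::finite \<Rightarrow> complex) \<Rightarrow> real^'n \<Rightarrow> complex" where
  "inv_fourier h x = complex_of_real ((2*pi) powr (- real CARD('n) / 2)) *
      (LINT \<xi>|lborel. cis (x \<bullet> \<xi>) * h \<xi>)"

definition ennsqrt :: "ennreal \<Rightarrow> ennreal" where
  "ennsqrt x = (if x = \<infinity> then \<infinity> else ennreal (sqrt (enn2real x)))"

text \<open>Squared H^s norm of a function given through its Fourier transform gh.\<close>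
definition sobolevF_sq :: "real \<Rightarrow> (real^'n::finite \<Rightarrow> complex) \<Rightarrow> ennreal" where
  "sobolevF_sq s gh = (\<integral>\<^sup>+\<xi>. ennreal ((1 + (norm \<xi>)\<^sup>2) powr s * (cmod (gh \<xi>))\<^sup>2) \<partial>lborel)"

definition Hs_norm :: "real \<Rightarrow> (real^'n::finite \<Rightarrow> real) \<Rightarrow> ennreal" where
  "Hs_norm s \<rho> = ennsqrt (sobolevF_sq s (fourier (\<lambda>x. complex_of_real (\<rho> x))))"

definition L1_norm :: "(real^'n::finite \<Rightarrow> real) \<Rightarrow> ennreal" where
  "L1_norm \<rho> = (\<integral>\<^sup>+x. ennreal \<bar>\<rho> x\<bar> \<partial>lborel)"

definition in_Hs_L1 :: "real \<Rightarrow> (real^'n::finite \<Rightarrow> real) \<Rightarrow> bool" where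
  "in_Hs_L1 s \<rho> \<longleftrightarrow> integrable lborel \<rho> \<and>
      sobolevF_sq s (fourier (\<lambda>x. complex_of_real (\<rho> x))) < \<infinity>"

text \<open>Fourier transform of f(rho): (2 pi)^(d/2) Khat rhohat.\<close>
definition nonlocal_hat :: "(real^'n::finite \<Rightarrow> complex) \<Rightarrow> (real^'n \<Rightarrow> real) \<Rightarrow> real^'n \<Rightarrow> complex" where
  "nonlocal_hat Khat \<rho> \<xi> = complex_of_real ((2*pi) powr (real CARD('n) / 2)) * Khat \<xi> *
      fourier (\<lambda>x. complex_of_real (\<rho> x)) \<xi>"

definition nonlocal :: "(real^'n::finite \<Rightarrow> complex) \<Rightarrow> (real^'n \<Rightarrow> real) \<Rightarrow> real^'n \<Rightarrow> complex" where
  "nonlocal Khat \<rho> = inv_fourier (nonlocal_hat Khat \<rho>)"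

text \<open>H^(s+1) norm of the gradient of f(rho): square root of the sum over j of the
  squared H^(s+1) norms of the partial derivatives, whose Fourier transforms are i xi_j times that of f(rho).\<close>
definition grad_nonlocal_Hs_norm :: "real \<Rightarrow> (real^'n::finite \<Rightarrow> complex) \<Rightarrow> (real^'n \<Rightarrow> real) \<Rightarrow> ennreal" where
  "grad_nonlocal_Hs_norm s Khat \<rho> = ennsqrt (\<Sum>j\<in>UNIV.
      sobolevF_sq s (\<lambda>\<xi>. \<i> * complex_of_real (\<xi> $ j) * nonlocal_hat Khat \<rho> \<xi>))"

end

theory Submission
  imports Defs
begin

text \<open>On the Fourier side the partial derivatives of \<open>f(\<rho>)\<close> have symbols
  \<open>i \<xi>\<^sub>j (2\<pi>)\<^sup>d\<^sup>/\<^sup>2 K\<^sup>^(\<xi>) \<rho>\<^sup>^(\<xi>)\<close>, and both hypotheses on \<open>K\<^sup>^\<close> give \<open>|\<xi>|\<^sup>2 |K\<^sup>^(\<xi>)| \<le> M\<close>.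
  Split the frequencies at \<open>|\<xi>| = 1\<close>. For \<open>|\<xi>| \<ge> 1\<close> this decay absorbs the extra factor
  \<open>(1 + |\<xi>|\<^sup>2) |\<xi>|\<^sup>2\<close>, so that part is bounded by the \<open>H\<^sup>s\<close> norm of \<open>\<rho>\<close>. For \<open>|\<xi>| < 1\<close> one uses
  \<open>|\<rho>\<^sup>^| \<le> (2\<pi>)\<^sup>-\<^sup>d\<^sup>/\<^sup>2 \<parallel>\<rho>\<parallel>\<^sub>1\<close> and the integrability of \<open>K\<^sup>^\<close> on the unit ball: for \<open>d \<le> 2\<close> it is bounded,
  for \<open>d \<ge> 3\<close> it is dominated by \<open>M |\<xi>|\<^sup>-\<^sup>2\<close>, which is integrable there because \<open>2 < d\<close>.

  For the sup bound, \<open>|f(\<rho>)(x)| \<le> (2\<pi>)\<^sup>-\<^sup>d\<^sup>/\<^sup>2 \<parallel>f(\<rho>)\<^sup>^\<parallel>\<^sub>1\<close>; the low frequencies are handled as above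
  and the high ones by Cauchy--Schwarz against the weight \<open>(1 + |\<xi>|\<^sup>2)\<^sup>-\<^sup>s\<close>, integrable when
  \<open>s > d/2\<close>. Integrability of these radial weights is checked by summing over dyadic shells.\<close>

lemma nn_integral_le_suminf_cball_volumes:
  fixes g :: "'a::euclidean_space \<Rightarrow> ennreal" and r :: "nat \<Rightarrow> real" and c :: "nat \<Rightarrow> ennreal"
  assumes r_nonneg: "\<And>k. r k \<ge> 0"
    and g_le: "\<And>\<xi>. g \<xi> = 0 \<or> (\<exists>k. norm \<xi> \<le> r k \<and> g \<xi> \<le> c k)"
  shows "(\<integral>\<^sup>+\<xi>. g \<xi> \<partial>lborel) \<le> (\<Sum>k. c k * ennreal (unit_ball_vol DIM('a) * r k ^ DIM('a)))"
proof -
  have "g \<xi> \<le> (\<Sum>k. c k * indicator (cball 0 (r k)) \<xi>)" for \<xi>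
    using g_le[of \<xi>]
  proof
    assume "\<exists>k. norm \<xi> \<le> r k \<and> g \<xi> \<le> c k"
    then obtain k where "norm \<xi> \<le> r k" "g \<xi> \<le> c k" by blast
    then have "g \<xi> \<le> c k * indicator (cball 0 (r k)) \<xi>" by (simp add: indicator_def)
    also have "\<dots> \<le> (\<Sum>k. c k * indicator (cball 0 (r k)) \<xi>)"
      using ennreal_suminf_lessD[of "\<lambda>k. c k * indicator (cball 0 (r k)) \<xi>" _ k] not_le by blast
    finally show ?thesis .
  qed simp
  then have "(\<integral>\<^sup>+\<xi>. g \<xi> \<partial>lborel) \<le> (\<integral>\<^sup>+\<xi>. (\<Sum>k. c k * indicator (cball 0 (r k)) \<xi>) \<partial>(lborel::'a measure))"
    by (intro nn_integral_mono)
  also have "\<dots> = (\<Sum>k. \<integral>\<^sup>+\<xi>. c k * indicator (cball 0 (r k)) \<xi> \<partial>(lborel::'a measure))"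
    by (rule nn_integral_suminf) (intro borel_measurable_times_ennreal borel_measurable_const borel_measurable_indicator, simp)
  also have "\<dots> = (\<Sum>k. c k * ennreal (unit_ball_vol DIM('a) * r k ^ DIM('a)))"
    using r_nonneg by (intro suminf_cong) (simp add: nn_integral_cmult_indicator emeasure_cball del: nn_integral_indicator_singleton)
  finally show ?thesis .
qed

lemma suminf_geometric_ennreal_less_top:
  fixes a q :: real
  assumes "a \<ge> 0" "0 \<le> q" "q < 1"
  shows "(\<Sum>k. ennreal (a * q ^ k)) < \<infinity>"
proof -
  have "summable (\<lambda>k. a * q ^ k)" using assms by (intro summable_mult summable_geometric) simp
  then show ?thesis using assms by (subst suminf_ennreal2) auto
qed

lemma ex_dyadic_bracket:
  fixes t :: real
  assumes "1 \<le> t"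
  shows "\<exists>k::nat. 2 ^ k \<le> t \<and> t < 2 ^ Suc k"
proof -
  define k where "k = nat \<lfloor>log 2 t\<rfloor>"
  have "0 \<le> log 2 t" using assms by simp
  then have "real k \<le> log 2 t" "log 2 t < real k + 1"
    unfolding k_def by linarith+
  then have "2 powr real k \<le> t" "t < 2 powr (real k + 1)"
    using assms by (simp_all add: le_log_iff log_less_iff)
  then show ?thesis
    by (intro exI[of _ k]) (simp add: powr_realpow powr_add)
qed

lemma ex_dyadic_powr_neg_le:
  fixes x a :: real
  assumes "0 < x" "x < 1" "0 \<le> a"
  shows "\<exists>k. x \<le> (1/2) ^ k \<and> x powr (-a) \<le> 2 powr a * (2 powr a) ^ k"
proof -
  define t where "t = 1 / x"
  have t1: "1 \<le> t" using assms unfolding t_def by simp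
  obtain k :: nat where k: "2 ^ k \<le> t" "t < 2 ^ Suc k" using ex_dyadic_bracket[OF t1] by blast
  have "x = 1 / t" using assms unfolding t_def by simp
  also have "\<dots> \<le> 1 / 2 ^ k" using k t1 by (intro divide_left_mono) auto
  finally have near: "x \<le> (1/2) ^ k" by (simp add: power_one_over)
  have "x powr (-a) = t powr a" unfolding t_def using assms by (simp add: powr_minus powr_divide inverse_eq_divide)
  also have "\<dots> \<le> (2 ^ Suc k) powr a" using k t1 assms(3) by (intro powr_mono2) auto
  also have "\<dots> = (2 powr real (Suc k)) powr a" by (subst powr_realpow) auto
  also have "\<dots> = 2 powr (real (Suc k) * a)" by (rule powr_powr)
  also have "\<dots> = 2 powr (a + real k * a)" by (rule arg_cong[of _ _ "\<lambda>e. (2::real) powr e"]) (simp add: algebra_simps)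
  also have "\<dots> = 2 powr a * 2 powr (real k * a)" by (rule powr_add)
  also have "2 powr (real k * a) = (2 powr a) ^ k" by (rule powr_power[symmetric]) simp
  finally show ?thesis using near by blast
qed

lemma ex_dyadic_sobolev_weight_le:
  fixes x s :: real
  assumes "1 \<le> x" "0 \<le> s"
  shows "\<exists>k. x \<le> 2 ^ k \<and> (1 + x\<^sup>2) powr (-s) \<le> 4 powr s * (4 powr (-s)) ^ k"
proof -
  obtain j :: nat where j: "2 ^ j \<le> x" "x < 2 ^ Suc j" using ex_dyadic_bracket[OF assms(1)] by blast
  have "((2::real) ^ j)\<^sup>2 \<le> 1 + x\<^sup>2"
    using power_mono[OF j(1), of 2] by (simp add: add_increasing)
  then have "(1 + x\<^sup>2) powr (-s) \<le> ((2 ^ j)\<^sup>2) powr (-s)"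
    using assms(2) by (intro powr_mono2') auto
  also have "((2::real) ^ j)\<^sup>2 = 4 powr (real j)"
    by (simp add: power_mult[symmetric] powr_realpow mult.commute[of j] power_mult)
  also have "(4 powr (real j)) powr (-s) = (4 powr (-s)) ^ j"
    by (simp add: powr_powr powr_realpow[symmetric] mult.commute)
  also have "\<dots> = 4 powr s * (4 powr (-s)) ^ Suc j"
    by (simp add: powr_minus)
  finally show ?thesis using j by (intro exI[of _ "Suc j"]) auto
qed

lemma nn_integral_ball_norm_powr_less_top:
  fixes a :: real
  assumes a_nonneg: "0 \<le> a" and a_less: "a < DIM('a::euclidean_space)"
  shows "(\<integral>\<^sup>+\<xi>. indicator (ball 0 1) \<xi> * ennreal (norm \<xi> powr (-a)) \<partial>(lborel::'a measure)) < \<infinity>"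
proof -
  define V where "V = unit_ball_vol DIM('a)"
  define q where "q = (2::real) powr (a - DIM('a))"
  have V0: "V \<ge> 0" unfolding V_def by simp
  have "(\<integral>\<^sup>+\<xi>. indicator (ball 0 1) \<xi> * ennreal (norm \<xi> powr (-a)) \<partial>(lborel::'a measure))
      \<le> (\<Sum>k. ennreal (2 powr a * (2 powr a) ^ k) * ennreal (V * ((1/2::real) ^ k) ^ DIM('a)))"
    unfolding V_def
  proof (rule nn_integral_le_suminf_cball_volumes)
    fix \<xi> :: 'a
    show "indicator (ball 0 1) \<xi> * ennreal (norm \<xi> powr (-a)) = 0 \<or>
       (\<exists>k. norm \<xi> \<le> (1/2) ^ k \<and> indicator (ball 0 1) \<xi> * ennreal (norm \<xi> powr (-a)) \<le> ennreal (2 powr a * (2 powr a) ^ k))"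
    proof (cases "\<xi> = 0 \<or> norm \<xi> \<ge> 1")
      case True
      then show ?thesis by (auto simp: indicator_def)
    next
      case False
      then obtain k where "norm \<xi> \<le> (1/2) ^ k" "norm \<xi> powr (-a) \<le> 2 powr a * (2 powr a) ^ k"
        using ex_dyadic_powr_neg_le[OF _ _ a_nonneg, of "norm \<xi>"] by auto
      then show ?thesis using False by (intro disjI2 exI[of _ k]) (auto simp: indicator_def ennreal_leI)
    qed
  qed simp
  also have "\<dots> = (\<Sum>k. ennreal (2 powr a * V * q ^ k))"
  proof (rule suminf_cong)
    fix k :: nat
    have pow: "2 powr real DIM('a) = (2::real) ^ DIM('a)" by (rule powr_realpow) simp
    have "((1/2::real) ^ k) ^ DIM('a) = ((1/2) ^ DIM('a)) ^ k"
      unfolding power_mult[symmetric] by (simp add: mult.commute)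
    then have "(2 powr a) ^ k * ((1/2::real) ^ k) ^ DIM('a) = (2 powr a * (1/2) ^ DIM('a)) ^ k"
      by (simp only: power_mult_distrib)
    also have "2 powr a * (1/2::real) ^ DIM('a) = q"
      unfolding q_def powr_diff pow by (simp add: power_one_over)
    finally show "ennreal (2 powr a * (2 powr a) ^ k) * ennreal (V * ((1/2::real) ^ k) ^ DIM('a)) = ennreal (2 powr a * V * q ^ k)"
      using V0 by (simp add: ennreal_mult''[symmetric] mult_ac)
  qed
  also have "\<dots> < \<infinity>"
  proof (rule suminf_geometric_ennreal_less_top)
    show "q < 1" unfolding q_def using a_less powr_less_mono[of "a - DIM('a)" 0 2] by simp
  qed (use V0 in \<open>auto simp: q_def\<close>)
  finally show ?thesis .
qed

lemma nn_integral_sobolev_weight_less_top: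
  fixes s :: real
  assumes dim_less: "DIM('a::euclidean_space) < 2 * s"
  shows "(\<integral>\<^sup>+\<xi>. ennreal ((1 + (norm \<xi>)\<^sup>2) powr (-s)) \<partial>(lborel::'a measure)) < \<infinity>"
proof -
  define V where "V = unit_ball_vol DIM('a)"
  define q where "q = (4::real) powr (-s)"
  have s0: "s \<ge> 0" using dim_less DIM_positive[where 'a='a] by linarith
  have V0: "V \<ge> 0" unfolding V_def by simp
  have q0: "q > 0" unfolding q_def by simp
  have "(\<integral>\<^sup>+\<xi>. ennreal ((1 + (norm \<xi>)\<^sup>2) powr (-s)) \<partial>(lborel::'a measure))
      \<le> (\<Sum>k. ennreal (4 powr s * q ^ k) * ennreal (V * (2 ^ k) ^ DIM('a)))"
    unfolding V_def
  proof (rule nn_integral_le_suminf_cball_volumes)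
    fix \<xi> :: 'a
    show "ennreal ((1 + (norm \<xi>)\<^sup>2) powr (-s)) = 0 \<or>
       (\<exists>k. norm \<xi> \<le> 2 ^ k \<and> ennreal ((1 + (norm \<xi>)\<^sup>2) powr (-s)) \<le> ennreal (4 powr s * q ^ k))"
    proof (cases "norm \<xi> < 1")
      case True
      have "(1 + (norm \<xi>)\<^sup>2) powr (-s) \<le> 1"
        using s0 by (simp add: powr_minus divide_simps ge_one_powr_ge_zero)
      moreover have "(4::real) powr s \<ge> 1" using s0 by (simp add: ge_one_powr_ge_zero)
      ultimately show ?thesis using True
        by (intro disjI2 exI[of _ 0]) (auto intro!: ennreal_leI)
    next
      case False
      then obtain k where "norm \<xi> \<le> 2 ^ k" "(1 + (norm \<xi>)\<^sup>2) powr (-s) \<le> 4 powr s * q ^ k"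
        using ex_dyadic_sobolev_weight_le[OF _ s0, of "norm \<xi>"] unfolding q_def by auto
      then show ?thesis by (intro disjI2 exI[of _ k]) (auto intro!: ennreal_leI)
    qed
  qed simp
  also have "\<dots> = (\<Sum>k. ennreal (4 powr s * V * (q * 2 ^ DIM('a)) ^ k))"
  proof (rule suminf_cong)
    fix k :: nat
    have "4 powr s * q ^ k * (V * (2 ^ k) ^ DIM('a)) = 4 powr s * V * (q * 2 ^ DIM('a)) ^ k"
      by (simp add: power_mult_distrib power_mult[symmetric] mult.commute[of k])
    then show "ennreal (4 powr s * q ^ k) * ennreal (V * (2 ^ k) ^ DIM('a)) = ennreal (4 powr s * V * (q * 2 ^ DIM('a)) ^ k)"
      using V0 q0 by (simp add: ennreal_mult''[symmetric])
  qed
  also have "\<dots> < \<infinity>"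
  proof (rule suminf_geometric_ennreal_less_top)
    have "q = 2 powr (- 2 * s)" unfolding q_def using powr_powr[of 2 2 "-s"] by simp
    then have "q * 2 ^ DIM('a) = 2 powr (real DIM('a) - 2 * s)"
      by (simp add: powr_realpow[symmetric] powr_add[symmetric])
    also have "\<dots> < 2 powr 0" using dim_less by (intro powr_less_mono) auto
    finally show "q * 2 ^ DIM('a) < 1" by simp
  qed (use V0 q0 in auto)
  finally show ?thesis .
qed

lemma borel_measurable_fourier [measurable]:
  fixes g :: "real^'n::finite \<Rightarrow> complex"
  assumes [measurable]: "g \<in> borel_measurable lborel"
  shows "fourier g \<in> borel_measurable lborel"
proof -
  have "(\<lambda>p::(real^'n) \<times> (real^'n). cis (- (snd p \<bullet> fst p))) \<in> borel_measurable borel"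
    by (intro borel_measurable_continuous_onI continuous_intros)
  then have "(\<lambda>(\<xi>::real^'n,x::real^'n). cis (- (x \<bullet> \<xi>))) \<in> borel_measurable (lborel \<Otimes>\<^sub>M lborel)"
    unfolding lborel_prod by (simp add: case_prod_beta')
  then have "(\<lambda>(\<xi>,x). cis (- (x \<bullet> \<xi>)) * g x) \<in> borel_measurable (lborel \<Otimes>\<^sub>M (lborel::(real^'n) measure))"
    by measurable
  then have "(\<lambda>\<xi>. LINT x|lborel. cis (- (x \<bullet> \<xi>)) * g x) \<in> borel_measurable lborel"
    by (intro lborel.borel_measurable_lebesgue_integral) simp
  then show ?thesis unfolding fourier_def[abs_def] by measurable
qed

lemma borel_measurable_inv_fourier [measurable]:
  fixes h :: "real^'n::finite \<Rightarrow> complex"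
  assumes [measurable]: "h \<in> borel_measurable lborel"
  shows "inv_fourier h \<in> borel_measurable lborel"
proof -
  have "(\<lambda>p::(real^'n) \<times> (real^'n). cis (fst p \<bullet> snd p)) \<in> borel_measurable borel"
    by (intro borel_measurable_continuous_onI continuous_intros)
  then have "(\<lambda>(x::real^'n,\<xi>::real^'n). cis (x \<bullet> \<xi>)) \<in> borel_measurable (lborel \<Otimes>\<^sub>M lborel)"
    unfolding lborel_prod by (simp add: case_prod_beta')
  then have "(\<lambda>(x,\<xi>). cis (x \<bullet> \<xi>) * h \<xi>) \<in> borel_measurable (lborel \<Otimes>\<^sub>M (lborel::(real^'n) measure))"
    by measurable
  then have "(\<lambda>x. LINT \<xi>|lborel. cis (x \<bullet> \<xi>) * h \<xi>) \<in> borel_measurable lborel"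
    by (intro lborel.borel_measurable_lebesgue_integral) simp
  then show ?thesis unfolding inv_fourier_def[abs_def] by measurable
qed

lemma norm_fourier_le:
  fixes g :: "real^'n::finite \<Rightarrow> complex"
  shows "cmod (fourier g \<xi>) \<le> (2*pi) powr (- real CARD('n) / 2) * (\<integral>x. cmod (g x) \<partial>lborel)"
proof -
  have "cmod (fourier g \<xi>)
      = (2*pi) powr (- real CARD('n) / 2) * cmod (LINT x|lborel. cis (- (x \<bullet> \<xi>)) * g x)"
    unfolding fourier_def by (simp add: norm_mult)
  also have "\<dots> \<le> (2*pi) powr (- real CARD('n) / 2) * (\<integral>x. cmod (cis (- (x \<bullet> \<xi>)) * g x) \<partial>lborel)"
    by (intro mult_left_mono integral_norm_bound) simp
  finally show ?thesis by (simp add: norm_mult)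
qed

text \<open>No integrability hypothesis is needed: if the positive integral is infinite, its
  \<open>enn2real\<close> is \<open>0\<close>, and so is the Bochner integral defining \<open>inv_fourier h\<close>.\<close>
lemma norm_inv_fourier_le:
  fixes h :: "real^'n::finite \<Rightarrow> complex"
  assumes [measurable]: "h \<in> borel_measurable lborel"
  shows "cmod (inv_fourier h x)
    \<le> (2*pi) powr (- real CARD('n) / 2) * enn2real (\<integral>\<^sup>+\<xi>. ennreal (cmod (h \<xi>)) \<partial>lborel)"
proof -
  have "cmod (inv_fourier h x)
      = (2*pi) powr (- real CARD('n) / 2) * cmod (LINT \<xi>|lborel. cis (x \<bullet> \<xi>) * h \<xi>)"
    unfolding inv_fourier_def by (simp add: norm_mult)
  also have "\<dots> \<le> (2*pi) powr (- real CARD('n) / 2) * (\<integral>\<xi>. cmod (cis (x \<bullet> \<xi>) * h \<xi>) \<partial>lborel)"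
    by (intro mult_left_mono integral_norm_bound) simp
  also have "(\<integral>\<xi>. cmod (cis (x \<bullet> \<xi>) * h \<xi>) \<partial>lborel) = enn2real (\<integral>\<^sup>+\<xi>. ennreal (cmod (h \<xi>)) \<partial>lborel)"
    by (simp add: norm_mult integral_eq_nn_integral)
  finally show ?thesis .
qed

lemma ennsqrt_ennreal: "t \<ge> 0 \<Longrightarrow> ennsqrt (ennreal t) = ennreal (sqrt t)"
  unfolding ennsqrt_def by simp

lemma ennsqrt_le_ennreal_sqrt:
  assumes "x \<le> ennreal t" "t \<ge> 0"
  shows "ennsqrt x \<le> ennreal (sqrt t)"
proof -
  have "x \<noteq> \<infinity>" using assms(1) by (auto simp: top_unique)
  moreover from this have "enn2real x \<le> t" using assms by (simp add: enn2real_leI)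
  ultimately show ?thesis unfolding ennsqrt_def by (auto intro!: ennreal_leI)
qed

lemma ennreal_le_sqrt_of_power2_le:
  fixes X :: ennreal
  assumes "X\<^sup>2 \<le> ennreal t" "t \<ge> 0"
  shows "X \<le> ennreal (sqrt t)"
proof (cases X)
  case (real r)
  then have "r\<^sup>2 \<le> t" using assms by (simp add: ennreal_power ennreal_le_iff)
  then show ?thesis using real by (simp add: real_le_rsqrt ennreal_leI)
qed (use assms in \<open>simp add: top_unique\<close>)

lemma sum_sobolevF_sq_partials:
  fixes h :: "real^'n::finite \<Rightarrow> complex"
  assumes [measurable]: "h \<in> borel_measurable lborel"
  shows "(\<Sum>j\<in>UNIV. sobolevF_sq s (\<lambda>\<xi>. \<i> * complex_of_real (\<xi> $ j) * h \<xi>))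
    = (\<integral>\<^sup>+\<xi>. ennreal ((1 + (norm \<xi>)\<^sup>2) powr s * ((norm \<xi>)\<^sup>2 * (cmod (h \<xi>))\<^sup>2)) \<partial>lborel)"
proof -
  have "(\<Sum>j\<in>UNIV. sobolevF_sq s (\<lambda>\<xi>. \<i> * complex_of_real (\<xi> $ j) * h \<xi>))
      = (\<integral>\<^sup>+\<xi>. (\<Sum>j\<in>UNIV. ennreal ((1 + (norm \<xi>)\<^sup>2) powr s * (cmod (\<i> * complex_of_real (\<xi> $ j) * h \<xi>))\<^sup>2)) \<partial>lborel)"
    unfolding sobolevF_sq_def by (rule nn_integral_sum[symmetric]) measurable
  also have "\<dots> = (\<integral>\<^sup>+\<xi>. ennreal ((1 + (norm \<xi>)\<^sup>2) powr s * ((norm \<xi>)\<^sup>2 * (cmod (h \<xi>))\<^sup>2)) \<partial>lborel)"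
  proof (rule nn_integral_cong)
    fix \<xi> :: "real^'n"
    have "(norm \<xi>)\<^sup>2 = (\<Sum>j\<in>UNIV. (\<xi> $ j)\<^sup>2)"
      by (simp add: norm_vec_def L2_set_def sum_nonneg)
    then have "(\<Sum>j\<in>UNIV. (1 + (norm \<xi>)\<^sup>2) powr s * (cmod (\<i> * complex_of_real (\<xi> $ j) * h \<xi>))\<^sup>2)
        = (1 + (norm \<xi>)\<^sup>2) powr s * ((norm \<xi>)\<^sup>2 * (cmod (h \<xi>))\<^sup>2)"
      by (simp add: norm_mult power_mult_distrib sum_distrib_left sum_distrib_right mult.assoc)
    then show "(\<Sum>j\<in>UNIV. ennreal ((1 + (norm \<xi>)\<^sup>2) powr s * (cmod (\<i> * complex_of_real (\<xi> $ j) * h \<xi>))\<^sup>2))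
        = ennreal ((1 + (norm \<xi>)\<^sup>2) powr s * ((norm \<xi>)\<^sup>2 * (cmod (h \<xi>))\<^sup>2))"
      by (subst sum_ennreal) simp_all
  qed
  finally show ?thesis .
qed

lemma nn_integral_norm_le_sobolevF_sq:
  fixes g :: "real^'n::finite \<Rightarrow> complex"
  assumes [measurable]: "g \<in> borel_measurable lborel"
  shows "(\<integral>\<^sup>+\<xi>. ennreal (cmod (g \<xi>)) \<partial>lborel)\<^sup>2
    \<le> sobolevF_sq s g * (\<integral>\<^sup>+\<xi>. ennreal ((1 + (norm \<xi>)\<^sup>2) powr (-s)) \<partial>(lborel::(real^'n) measure))"
proof -
  define w where "w \<xi> = 1 + (norm \<xi>)\<^sup>2" for \<xi> :: "real^'n"
  have w_pos: "w \<xi> > 0" for \<xi> unfolding w_def by (simp add: add_pos_nonneg)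
  have w_cancel: "w \<xi> powr (s/2) * w \<xi> powr (- (s/2)) = 1" for \<xi>
    using w_pos[of \<xi>] by (simp add: powr_add[symmetric])
  have w_sq: "(w \<xi> powr (s/2))\<^sup>2 = w \<xi> powr s" "(w \<xi> powr (- (s/2)))\<^sup>2 = w \<xi> powr (-s)" for \<xi>
    using w_pos[of \<xi>] by (simp_all add: power2_eq_square powr_add[symmetric])
  have "(\<integral>\<^sup>+\<xi>. ennreal (cmod (g \<xi>)) \<partial>lborel)
      = (\<integral>\<^sup>+\<xi>. ennreal (w \<xi> powr (s/2) * cmod (g \<xi>)) * ennreal (w \<xi> powr (-s/2)) \<partial>lborel)"
    by (intro nn_integral_cong) (simp add: ennreal_mult[symmetric] w_cancel mult_ac)
  also have "\<dots>\<^sup>2 \<le> (\<integral>\<^sup>+\<xi>. (ennreal (w \<xi> powr (s/2) * cmod (g \<xi>)))\<^sup>2 \<partial>lborel)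
      * (\<integral>\<^sup>+\<xi>. (ennreal (w \<xi> powr (-s/2)))\<^sup>2 \<partial>lborel)"
    unfolding w_def by (rule Cauchy_Schwarz_nn_integral) measurable
  also have "(\<integral>\<^sup>+\<xi>. (ennreal (w \<xi> powr (s/2) * cmod (g \<xi>)))\<^sup>2 \<partial>lborel) = sobolevF_sq s g"
    unfolding sobolevF_sq_def
    by (intro nn_integral_cong) (simp add: ennreal_power power_mult_distrib w_sq(1) w_def[symmetric])
  also have "(\<integral>\<^sup>+\<xi>. (ennreal (w \<xi> powr (-s/2)))\<^sup>2 \<partial>lborel)
      = (\<integral>\<^sup>+\<xi>. ennreal ((1 + (norm \<xi>)\<^sup>2) powr (-s)) \<partial>(lborel::(real^'n) measure))"
    by (intro nn_integral_cong) (simp add: ennreal_power w_sq(2) w_def[symmetric])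
  finally show ?thesis .
qed

lemma ex_norm_sq_mult_kernel_bound:
  fixes K :: "real^'n::finite \<Rightarrow> complex"
  assumes low: "CARD('n) \<le> 2 \<Longrightarrow> (\<exists>M. \<forall>\<xi>. (1 + (norm \<xi>)\<^sup>2) * cmod (K \<xi>) \<le> M)"
    and high: "CARD('n) \<ge> 3 \<Longrightarrow> (\<exists>M. \<forall>\<xi>. (norm \<xi>)\<^sup>2 * cmod (K \<xi>) \<le> M)"
  shows "\<exists>M. \<forall>\<xi>. (norm \<xi>)\<^sup>2 * cmod (K \<xi>) \<le> M"
proof (cases "CARD('n) \<le> 2")
  case True
  then obtain M where M: "\<And>\<xi>. (1 + (norm \<xi>)\<^sup>2) * cmod (K \<xi>) \<le> M" using low by blast
  have "(norm \<xi>)\<^sup>2 * cmod (K \<xi>) \<le> M" for \<xi>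
    using M[of \<xi>] by (smt (verit) mult_right_mono norm_ge_zero)
  then show ?thesis by blast
qed (use high in force)

lemma kernel_nn_integral_ball_less_top:
  fixes K :: "real^'n::finite \<Rightarrow> complex"
  assumes [measurable]: "K \<in> borel_measurable lborel"
    and low: "CARD('n) \<le> 2 \<Longrightarrow> (\<exists>M. \<forall>\<xi>. (1 + (norm \<xi>)\<^sup>2) * cmod (K \<xi>) \<le> M)"
    and high: "CARD('n) \<ge> 3 \<Longrightarrow> (\<exists>M. \<forall>\<xi>. (norm \<xi>)\<^sup>2 * cmod (K \<xi>) \<le> M)"
  shows "(\<integral>\<^sup>+\<xi>. indicator (ball 0 1) \<xi> * ennreal (cmod (K \<xi>)) \<partial>lborel) < \<infinity>"
proof (cases "CARD('n) \<le> 2")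
  case True
  then obtain M where M: "\<And>\<xi>. (1 + (norm \<xi>)\<^sup>2) * cmod (K \<xi>) \<le> M" using low by blast
  have "cmod (K \<xi>) \<le> M" for \<xi>
    using M[of \<xi>] by (smt (verit) mult_right_mono norm_ge_zero zero_le_power2 mult_cancel_right1)
  then have "(\<integral>\<^sup>+\<xi>. indicator (ball 0 1) \<xi> * ennreal (cmod (K \<xi>)) \<partial>lborel)
      \<le> (\<integral>\<^sup>+\<xi>. ennreal M * indicator (ball 0 1) \<xi> \<partial>(lborel::(real^'n) measure))"
    by (intro nn_integral_mono) (auto simp: indicator_def ennreal_leI)
  also have "\<dots> = ennreal M * emeasure lborel (ball (0::real^'n) 1)"
    by (simp add: nn_integral_cmult_indicator del: nn_integral_indicator_singleton)
  also have "\<dots> < \<infinity>" by (simp add: emeasure_ball ennreal_mult_less_top)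
  finally show ?thesis .
next
  case False
  then obtain M where M: "\<And>\<xi>. (norm \<xi>)\<^sup>2 * cmod (K \<xi>) \<le> M" using high by force
  have M_nonneg: "M \<ge> 0" using M[of 0] by simp
  have [measurable]: "ball (0::real^'n) 1 \<in> sets borel" by simp
  have "(\<integral>\<^sup>+\<xi>. indicator (ball 0 1) \<xi> * ennreal (cmod (K \<xi>)) \<partial>lborel)
      \<le> (\<integral>\<^sup>+\<xi>. ennreal M * (indicator (ball 0 1) \<xi> * ennreal (norm \<xi> powr (-2))) \<partial>(lborel::(real^'n) measure))"
  proof (rule nn_integral_mono_AE)
    show "AE \<xi> in lborel. indicator (ball 0 1) \<xi> * ennreal (cmod (K \<xi>))
        \<le> ennreal M * (indicator (ball 0 1) \<xi> * ennreal (norm \<xi> powr (-2)))"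
      using AE_lborel_singleton[of 0]
    proof eventually_elim
      case (elim \<xi>)
      then have "norm \<xi> > 0" by simp
      then have "cmod (K \<xi>) \<le> M * norm \<xi> powr (-2)"
        using M[of \<xi>] by (simp add: powr_minus field_simps)
      then show ?case
        using M_nonneg by (auto simp: indicator_def ennreal_mult''[symmetric] intro!: ennreal_leI)
    qed
  qed
  also have "\<dots> = ennreal M * (\<integral>\<^sup>+\<xi>. indicator (ball 0 1) \<xi> * ennreal (norm \<xi> powr (-2)) \<partial>(lborel::(real^'n) measure))"
    by (rule nn_integral_cmult) measurable
  also have "\<dots> < \<infinity>"
    using nn_integral_ball_norm_powr_less_top[of 2, where 'a="real^'n"] False
    by (simp add: ennreal_mult_less_top)
  finally show ?thesis .
qed

lemma norm_nonlocal_hat: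
  fixes K :: "real^'n::finite \<Rightarrow> complex"
  shows "cmod (nonlocal_hat K \<rho> \<xi>)
    = (2*pi) powr (real CARD('n) / 2) * cmod (K \<xi>) * cmod (fourier (\<lambda>x. complex_of_real (\<rho> x)) \<xi>)"
  unfolding nonlocal_hat_def by (simp add: norm_mult)

lemma borel_measurable_nonlocal_hat [measurable]:
  fixes K :: "real^'n::finite \<Rightarrow> complex"
  assumes [measurable]: "K \<in> borel_measurable lborel" "\<rho> \<in> borel_measurable lborel"
  shows "nonlocal_hat K \<rho> \<in> borel_measurable lborel"
  unfolding nonlocal_hat_def[abs_def] by measurable

lemma L1_norm_eq_integral: "integrable lborel \<rho> \<Longrightarrow> L1_norm \<rho> = ennreal (\<integral>x. \<bar>\<rho> x\<bar> \<partial>lborel)"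
  unfolding L1_norm_def by (rule nn_integral_eq_integral) auto

lemma in_Hs_L1E:
  assumes "in_Hs_L1 s \<rho>"
  obtains H where "H \<ge> 0" "sobolevF_sq s (fourier (\<lambda>x. complex_of_real (\<rho> x))) = ennreal H"
    "Hs_norm s \<rho> = ennreal (sqrt H)"
proof
  let ?H = "enn2real (sobolevF_sq s (fourier (\<lambda>x. complex_of_real (\<rho> x))))"
  show "sobolevF_sq s (fourier (\<lambda>x. complex_of_real (\<rho> x))) = ennreal ?H"
    using assms unfolding in_Hs_L1_def by (simp add: less_top)
  then show "Hs_norm s \<rho> = ennreal (sqrt ?H)"
    unfolding Hs_norm_def by (metis enn2real_nonneg ennsqrt_ennreal)
qed simp

text \<open>Here \<open>n, k, r, L\<close> stand for \<open>|\<xi>|\<close>, \<open>|K\<^sup>^(\<xi>)|\<close>, \<open>|\<rho>\<^sup>^(\<xi>)|\<close>, \<open>\<parallel>\<rho>\<parallel>\<^sub>1\<close>, and \<open>c, P\<close> for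
  \<open>(2\<pi>)\<^sup>-\<^sup>d\<^sup>/\<^sup>2, (2\<pi>)\<^sup>d\<^sup>/\<^sup>2\<close>; the two summands are the high- and low-frequency contributions.\<close>
lemma gradient_symbol_le:
  fixes n k r M L P c s :: real
  assumes "0 \<le> n" "0 \<le> k" "0 \<le> r" "0 \<le> s"
    and decay: "n\<^sup>2 * k \<le> M" and r_le: "r \<le> c * L" and cP: "c * P = 1"
  shows "(1 + n\<^sup>2) powr (s + 1) * (n\<^sup>2 * (P * k * r)\<^sup>2)
    \<le> 2 * M\<^sup>2 * P\<^sup>2 * ((1 + n\<^sup>2) powr s * r\<^sup>2) + (if n < 1 then 2 powr (s + 1) * M * L\<^sup>2 * k else 0)"
proof -
  define w where "w = 1 + n\<^sup>2"
  have w1: "w \<ge> 1" unfolding w_def by simp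
  have M0: "M \<ge> 0" using decay assms(1,2) by (smt (verit) mult_nonneg_nonneg zero_le_power2)
  have lhs: "w powr (s + 1) * (n\<^sup>2 * (P * k * r)\<^sup>2) = w powr (s + 1) * (P\<^sup>2 * ((n\<^sup>2 * k) * k * r\<^sup>2))"
    by (simp add: power_mult_distrib power2_eq_square mult_ac)
  have rhs_nonneg: "0 \<le> 2 * M\<^sup>2 * P\<^sup>2 * (w powr s * r\<^sup>2)" by simp
  show ?thesis
  proof (cases "n < 1")
    case True
    have w2: "w powr (s + 1) \<le> 2 powr (s + 1)"
      unfolding w_def using True assms(1,4) by (intro powr_mono2) (auto simp: power_le_one)
    have "P\<^sup>2 * ((n\<^sup>2 * k) * k * r\<^sup>2) \<le> P\<^sup>2 * (M * k * (c * L)\<^sup>2)"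
      using decay assms(2,3) r_le M0 by (intro mult_left_mono mult_mono power_mono) auto
    also have "\<dots> = M * k * L\<^sup>2" using cP by (simp add: power_mult_distrib[symmetric] mult_ac)
    finally have "w powr (s + 1) * (P\<^sup>2 * ((n\<^sup>2 * k) * k * r\<^sup>2)) \<le> 2 powr (s + 1) * (M * k * L\<^sup>2)"
      using M0 assms(2) by (intro mult_mono[OF w2]) auto
    also have "\<dots> \<le> 2 * M\<^sup>2 * P\<^sup>2 * (w powr s * r\<^sup>2) + 2 powr (s + 1) * (M * k * L\<^sup>2)"
      using rhs_nonneg by simp
    finally show ?thesis using True unfolding w_def[symmetric] lhs by (simp add: mult_ac)
  next
    case False
    have "w * ((n\<^sup>2 * k) * k) \<le> (2 * n\<^sup>2) * ((n\<^sup>2 * k) * k)"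
      using False assms(1,2) unfolding w_def by (intro mult_right_mono) (auto simp: one_le_power)
    also have "\<dots> = 2 * (n\<^sup>2 * k)\<^sup>2" by (simp add: power2_eq_square mult_ac)
    also have "\<dots> \<le> 2 * M\<^sup>2" using decay assms(1,2) by (intro mult_left_mono power_mono) auto
    finally have "w * ((n\<^sup>2 * k) * k) \<le> 2 * M\<^sup>2" .
    have "w powr (s + 1) * (P\<^sup>2 * ((n\<^sup>2 * k) * k * r\<^sup>2)) = w powr s * (P\<^sup>2 * r\<^sup>2) * (w * ((n\<^sup>2 * k) * k))"
      using w1 by (simp add: powr_add mult_ac)
    also have "\<dots> \<le> w powr s * (P\<^sup>2 * r\<^sup>2) * (2 * M\<^sup>2)"
      using \<open>w * ((n\<^sup>2 * k) * k) \<le> 2 * M\<^sup>2\<close> by (intro mult_left_mono) auto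
    also have "\<dots> = 2 * M\<^sup>2 * P\<^sup>2 * (w powr s * r\<^sup>2)" by (simp add: mult_ac)
    finally show ?thesis using False unfolding w_def[symmetric] lhs by simp
  qed
qed

lemma sum_sobolevF_sq_grad_nonlocal_le:
  fixes K :: "real^'n::finite \<Rightarrow> complex" and \<rho> :: "real^'n \<Rightarrow> real" and s M :: real
  assumes K_meas [measurable]: "K \<in> borel_measurable lborel"
    and decay: "\<And>\<xi>. (norm \<xi>)\<^sup>2 * cmod (K \<xi>) \<le> M"
    and s_nonneg: "s \<ge> 0"
    and int: "integrable lborel \<rho>"
  shows "(\<Sum>j\<in>UNIV. sobolevF_sq (s + 1) (\<lambda>\<xi>. \<i> * complex_of_real (\<xi> $ j) * nonlocal_hat K \<rho> \<xi>))
    \<le> ennreal (2 * M\<^sup>2 * ((2*pi) powr (real CARD('n) / 2))\<^sup>2) * sobolevF_sq s (fourier (\<lambda>x. complex_of_real (\<rho> x)))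
      + ennreal (2 powr (s + 1) * M * (\<integral>x. \<bar>\<rho> x\<bar> \<partial>lborel)\<^sup>2)
        * (\<integral>\<^sup>+\<xi>. indicator (ball 0 1) \<xi> * ennreal (cmod (K \<xi>)) \<partial>lborel)"
proof -
  define c where "c = (2*pi) powr (- real CARD('n) / 2)"
  define P where "P = (2*pi) powr (real CARD('n) / 2)"
  define R where "R = fourier (\<lambda>x. complex_of_real (\<rho> x))"
  define L where "L = (\<integral>x. \<bar>\<rho> x\<bar> \<partial>lborel)"
  define A where "A = 2 * M\<^sup>2 * P\<^sup>2"
  define D where "D = 2 powr (s + 1) * M * L\<^sup>2"
  have cP: "c * P = 1" unfolding c_def P_def by (simp add: powr_add[symmetric])
  have M0: "M \<ge> 0" using decay[of 0] by simp
  have A0: "A \<ge> 0" and D0: "D \<ge> 0" unfolding A_def D_def using M0 by auto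
  have \<rho>_meas [measurable]: "\<rho> \<in> borel_measurable lborel" using int by (simp add: borel_measurable_integrable)
  have [measurable]: "ball (0::real^'n) 1 \<in> sets borel" by simp
  have R_le: "cmod (R \<xi>) \<le> c * L" for \<xi>
    using norm_fourier_le[of "\<lambda>x. complex_of_real (\<rho> x)"] unfolding R_def c_def L_def by simp
  have pointwise: "ennreal ((1 + (norm \<xi>)\<^sup>2) powr (s + 1) * ((norm \<xi>)\<^sup>2 * (cmod (nonlocal_hat K \<rho> \<xi>))\<^sup>2))
      \<le> ennreal A * ennreal ((1 + (norm \<xi>)\<^sup>2) powr s * (cmod (R \<xi>))\<^sup>2)
        + ennreal D * (indicator (ball 0 1) \<xi> * ennreal (cmod (K \<xi>)))" for \<xi>
  proof -
    have "(1 + (norm \<xi>)\<^sup>2) powr (s + 1) * ((norm \<xi>)\<^sup>2 * (cmod (nonlocal_hat K \<rho> \<xi>))\<^sup>2)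
        \<le> A * ((1 + (norm \<xi>)\<^sup>2) powr s * (cmod (R \<xi>))\<^sup>2) + (if norm \<xi> < 1 then D * cmod (K \<xi>) else 0)"
      using gradient_symbol_le[OF _ _ _ s_nonneg decay R_le cP]
      unfolding norm_nonlocal_hat R_def[symmetric] P_def[symmetric] A_def D_def by (simp add: mult_ac)
    then have "ennreal ((1 + (norm \<xi>)\<^sup>2) powr (s + 1) * ((norm \<xi>)\<^sup>2 * (cmod (nonlocal_hat K \<rho> \<xi>))\<^sup>2))
        \<le> ennreal (A * ((1 + (norm \<xi>)\<^sup>2) powr s * (cmod (R \<xi>))\<^sup>2) + (if norm \<xi> < 1 then D * cmod (K \<xi>) else 0))"
      by (rule ennreal_leI)
    also have "\<dots> = ennreal (A * ((1 + (norm \<xi>)\<^sup>2) powr s * (cmod (R \<xi>))\<^sup>2))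
        + ennreal (if norm \<xi> < 1 then D * cmod (K \<xi>) else 0)"
      using A0 D0 by (intro ennreal_plus) auto
    also have "\<dots> = ennreal A * ennreal ((1 + (norm \<xi>)\<^sup>2) powr s * (cmod (R \<xi>))\<^sup>2)
        + ennreal D * (indicator (ball 0 1) \<xi> * ennreal (cmod (K \<xi>)))"
      using A0 D0 by (simp add: indicator_def ennreal_mult)
    finally show ?thesis .
  qed
  have "(\<Sum>j\<in>UNIV. sobolevF_sq (s + 1) (\<lambda>\<xi>. \<i> * complex_of_real (\<xi> $ j) * nonlocal_hat K \<rho> \<xi>))
      \<le> (\<integral>\<^sup>+\<xi>. ennreal A * ennreal ((1 + (norm \<xi>)\<^sup>2) powr s * (cmod (R \<xi>))\<^sup>2)
        + ennreal D * (indicator (ball 0 1) \<xi> * ennreal (cmod (K \<xi>))) \<partial>lborel)"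
    unfolding sum_sobolevF_sq_partials[OF borel_measurable_nonlocal_hat[OF K_meas \<rho>_meas]]
    using pointwise by (intro nn_integral_mono)
  also have "\<dots> = ennreal A * sobolevF_sq s R + ennreal D * (\<integral>\<^sup>+\<xi>. indicator (ball 0 1) \<xi> * ennreal (cmod (K \<xi>)) \<partial>lborel)"
    unfolding sobolevF_sq_def R_def
    apply (subst nn_integral_add)
      apply measurable
    apply (subst nn_integral_cmult, measurable)+
    done
  finally show ?thesis unfolding A_def D_def P_def R_def L_def .
qed

lemma grad_nonlocal_Hs_norm_le:
  fixes K :: "real^'n::finite \<Rightarrow> complex" and s M :: real
  assumes K_meas: "K \<in> borel_measurable lborel"
    and decay: "\<And>\<xi>. (norm \<xi>)\<^sup>2 * cmod (K \<xi>) \<le> M"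
    and near_origin: "(\<integral>\<^sup>+\<xi>. indicator (ball 0 1) \<xi> * ennreal (cmod (K \<xi>)) \<partial>lborel) < \<infinity>"
    and s_nonneg: "s \<ge> 0"
  shows "\<exists>C. \<forall>\<rho>. in_Hs_L1 s \<rho> \<longrightarrow>
    grad_nonlocal_Hs_norm (s + 1) K \<rho> \<le> ennreal C * (Hs_norm s \<rho> + L1_norm \<rho>)"
proof -
  define B where "B = enn2real (\<integral>\<^sup>+\<xi>. indicator (ball 0 1) \<xi> * ennreal (cmod (K \<xi>)) \<partial>lborel)"
  define A where "A = 2 * M\<^sup>2 * ((2*pi) powr (real CARD('n) / 2))\<^sup>2"
  define D where "D = 2 powr (s + 1) * M"
  have B: "(\<integral>\<^sup>+\<xi>. indicator (ball 0 1) \<xi> * ennreal (cmod (K \<xi>)) \<partial>lborel) = ennreal B" "B \<ge> 0"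
    using near_origin unfolding B_def by (auto simp: less_top)
  have M0: "M \<ge> 0" using decay[of 0] by simp
  have A0: "A \<ge> 0" and D0: "D \<ge> 0" unfolding A_def D_def using M0 by auto
  show ?thesis
  proof (intro exI[of _ "sqrt A + sqrt (D * B)"] allI impI)
    fix \<rho> :: "real^'n \<Rightarrow> real"
    assume \<rho>: "in_Hs_L1 s \<rho>"
    define L where "L = (\<integral>x. \<bar>\<rho> x\<bar> \<partial>lborel)"
    have int: "integrable lborel \<rho>" using \<rho> unfolding in_Hs_L1_def by simp
    obtain H where H: "H \<ge> 0" "sobolevF_sq s (fourier (\<lambda>x. complex_of_real (\<rho> x))) = ennreal H"
      "Hs_norm s \<rho> = ennreal (sqrt H)"
      using in_Hs_L1E[OF \<rho>] by blast
    have L0: "L \<ge> 0" unfolding L_def by simp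
    have "(\<Sum>j\<in>UNIV. sobolevF_sq (s + 1) (\<lambda>\<xi>. \<i> * complex_of_real (\<xi> $ j) * nonlocal_hat K \<rho> \<xi>))
        \<le> ennreal (A * H + D * L\<^sup>2 * B)"
      using sum_sobolevF_sq_grad_nonlocal_le[OF K_meas decay s_nonneg int] A0 D0 H(1) B(2) L0
      unfolding H(2) B(1) A_def[symmetric] L_def[symmetric] D_def[symmetric]
      by (simp add: ennreal_mult[symmetric] ennreal_plus[symmetric] mult.assoc del: ennreal_plus)
    then have grad_le: "grad_nonlocal_Hs_norm (s + 1) K \<rho> \<le> ennreal (sqrt (A * H + D * L\<^sup>2 * B))"
      unfolding grad_nonlocal_Hs_norm_def using A0 D0 H(1) B(2) by (intro ennsqrt_le_ennreal_sqrt) auto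
    have "sqrt (A * H + D * L\<^sup>2 * B) \<le> sqrt (A * H) + sqrt (D * L\<^sup>2 * B)"
      using A0 D0 H(1) B(2) by (intro sqrt_add_le_add_sqrt) auto
    also have "\<dots> = sqrt A * sqrt H + sqrt (D * B) * L"
      using L0 by (simp add: real_sqrt_mult mult_ac)
    also have "\<dots> \<le> (sqrt A + sqrt (D * B)) * (sqrt H + L)"
      using A0 D0 H(1) B(2) L0 by (simp add: algebra_simps)
    finally have "ennreal (sqrt (A * H + D * L\<^sup>2 * B)) \<le> ennreal (sqrt A + sqrt (D * B)) * (Hs_norm s \<rho> + L1_norm \<rho>)"
      using A0 D0 B(2) H(1) L0 unfolding H(3) L1_norm_eq_integral[OF int] L_def[symmetric]
      by (simp add: ennreal_leI ennreal_mult[symmetric] ennreal_plus[symmetric] del: ennreal_plus)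
    with grad_le show "grad_nonlocal_Hs_norm (s + 1) K \<rho> \<le> ennreal (sqrt A + sqrt (D * B)) * (Hs_norm s \<rho> + L1_norm \<rho>)"
      by (rule order_trans)
  qed
qed


lemma nn_integral_norm_nonlocal_hat_le:
  fixes K :: "real^'n::finite \<Rightarrow> complex" and \<rho> :: "real^'n \<Rightarrow> real" and M :: real
  assumes K_meas [measurable]: "K \<in> borel_measurable lborel"
    and decay: "\<And>\<xi>. (norm \<xi>)\<^sup>2 * cmod (K \<xi>) \<le> M"
    and int: "integrable lborel \<rho>"
  shows "(\<integral>\<^sup>+\<xi>. ennreal (cmod (nonlocal_hat K \<rho> \<xi>)) \<partial>lborel)
    \<le> ennreal (\<integral>x. \<bar>\<rho> x\<bar> \<partial>lborel) * (\<integral>\<^sup>+\<xi>. indicator (ball 0 1) \<xi> * ennreal (cmod (K \<xi>)) \<partial>lborel)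
      + ennreal ((2*pi) powr (real CARD('n) / 2) * M)
        * (\<integral>\<^sup>+\<xi>. ennreal (cmod (fourier (\<lambda>x. complex_of_real (\<rho> x)) \<xi>)) \<partial>lborel)"
proof -
  define c where "c = (2*pi) powr (- real CARD('n) / 2)"
  define P where "P = (2*pi) powr (real CARD('n) / 2)"
  define R where "R = fourier (\<lambda>x. complex_of_real (\<rho> x))"
  define L where "L = (\<integral>x. \<bar>\<rho> x\<bar> \<partial>lborel)"
  have P0: "P > 0" unfolding P_def by simp
  have cP: "c * P = 1" unfolding c_def P_def by (simp add: powr_add[symmetric])
  have L0: "L \<ge> 0" unfolding L_def by simp
  have M0: "M \<ge> 0" using decay[of 0] by simp
  have \<rho>_meas [measurable]: "\<rho> \<in> borel_measurable lborel" using int by (simp add: borel_measurable_integrable)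
  have [measurable]: "ball (0::real^'n) 1 \<in> sets borel" by simp
  have pointwise: "ennreal (cmod (nonlocal_hat K \<rho> \<xi>))
      \<le> ennreal L * (indicator (ball 0 1) \<xi> * ennreal (cmod (K \<xi>))) + ennreal (P * M) * ennreal (cmod (R \<xi>))" for \<xi>
  proof (cases "norm \<xi> < 1")
    case True
    have "P * cmod (K \<xi>) * cmod (R \<xi>) \<le> P * cmod (K \<xi>) * (c * L)"
      using P0 norm_fourier_le[of "\<lambda>x. complex_of_real (\<rho> x)" \<xi>]
      unfolding R_def c_def L_def by (intro mult_left_mono) auto
    also have "\<dots> = L * cmod (K \<xi>)" using cP by (simp add: mult_ac)
    finally have "ennreal (cmod (nonlocal_hat K \<rho> \<xi>)) \<le> ennreal L * (indicator (ball 0 1) \<xi> * ennreal (cmod (K \<xi>)))"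
      using True L0 unfolding norm_nonlocal_hat R_def[symmetric] P_def[symmetric]
      by (simp add: indicator_def ennreal_mult[symmetric] ennreal_leI)
    then show ?thesis by (rule order_trans) simp
  next
    case False
    then have "(norm \<xi>)\<^sup>2 \<ge> 1" by (simp add: one_le_power)
    then have "cmod (K \<xi>) \<le> M"
      using decay[of \<xi>] mult_le_cancel_right1[of "cmod (K \<xi>)" "(norm \<xi>)\<^sup>2"] by (smt (verit) norm_ge_zero)
    then have "P * cmod (K \<xi>) * cmod (R \<xi>) \<le> P * M * cmod (R \<xi>)"
      using P0 by (intro mult_right_mono mult_left_mono) auto
    then have "ennreal (cmod (nonlocal_hat K \<rho> \<xi>)) \<le> ennreal (P * M) * ennreal (cmod (R \<xi>))"
      using P0 M0 unfolding norm_nonlocal_hat R_def[symmetric] P_def[symmetric]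
      by (simp add: ennreal_mult[symmetric] ennreal_leI)
    then show ?thesis by (rule order_trans) simp
  qed
  have "(\<integral>\<^sup>+\<xi>. ennreal (cmod (nonlocal_hat K \<rho> \<xi>)) \<partial>lborel)
      \<le> (\<integral>\<^sup>+\<xi>. ennreal L * (indicator (ball 0 1) \<xi> * ennreal (cmod (K \<xi>)))
        + ennreal (P * M) * ennreal (cmod (R \<xi>)) \<partial>lborel)"
    using pointwise by (intro nn_integral_mono)
  also have "\<dots> = ennreal L * (\<integral>\<^sup>+\<xi>. indicator (ball 0 1) \<xi> * ennreal (cmod (K \<xi>)) \<partial>lborel)
      + ennreal (P * M) * (\<integral>\<^sup>+\<xi>. ennreal (cmod (R \<xi>)) \<partial>lborel)"
    unfolding R_def
    apply (subst nn_integral_add)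
      apply measurable
    apply (subst nn_integral_cmult, measurable)+
    done
  finally show ?thesis unfolding L_def P_def R_def .
qed

lemma norm_nonlocal_le:
  fixes K :: "real^'n::finite \<Rightarrow> complex" and \<rho> :: "real^'n \<Rightarrow> real" and s M B W H :: real
  assumes K_meas [measurable]: "K \<in> borel_measurable lborel"
    and decay: "\<And>\<xi>. (norm \<xi>)\<^sup>2 * cmod (K \<xi>) \<le> M"
    and int: "integrable lborel \<rho>"
    and B: "(\<integral>\<^sup>+\<xi>. indicator (ball 0 1) \<xi> * ennreal (cmod (K \<xi>)) \<partial>lborel) = ennreal B" "B \<ge> 0"
    and W: "(\<integral>\<^sup>+\<xi>. ennreal ((1 + (norm \<xi>)\<^sup>2) powr (-s)) \<partial>(lborel::(real^'n) measure)) = ennreal W" "W \<ge> 0"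
    and H: "sobolevF_sq s (fourier (\<lambda>x. complex_of_real (\<rho> x))) = ennreal H" "H \<ge> 0"
  shows "cmod (nonlocal K \<rho> x)
    \<le> ((2*pi) powr (- real CARD('n) / 2) * B + M * sqrt W) * (sqrt H + (\<integral>x. \<bar>\<rho> x\<bar> \<partial>lborel))"
proof -
  define c where "c = (2*pi) powr (- real CARD('n) / 2)"
  define P where "P = (2*pi) powr (real CARD('n) / 2)"
  define R where "R = fourier (\<lambda>x. complex_of_real (\<rho> x))"
  define L where "L = (\<integral>x. \<bar>\<rho> x\<bar> \<partial>lborel)"
  have c0: "c > 0" and P0: "P > 0" unfolding c_def P_def by auto
  have cP: "c * P = 1" unfolding c_def P_def by (simp add: powr_add[symmetric])
  have L0: "L \<ge> 0" unfolding L_def by simp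
  have M0: "M \<ge> 0" using decay[of 0] by simp
  have [measurable]: "\<rho> \<in> borel_measurable lborel" using int by (simp add: borel_measurable_integrable)
  have "(\<integral>\<^sup>+\<xi>. ennreal (cmod (R \<xi>)) \<partial>lborel)\<^sup>2 \<le> ennreal (H * W)"
    using nn_integral_norm_le_sobolevF_sq[of R s] H W by (simp add: R_def ennreal_mult)
  then have "(\<integral>\<^sup>+\<xi>. ennreal (cmod (R \<xi>)) \<partial>lborel) \<le> ennreal (sqrt (H * W))"
    using H(2) W(2) by (intro ennreal_le_sqrt_of_power2_le) auto
  then have "(\<integral>\<^sup>+\<xi>. ennreal (cmod (nonlocal_hat K \<rho> \<xi>)) \<partial>lborel)
      \<le> ennreal L * ennreal B + ennreal (P * M) * ennreal (sqrt (H * W))"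
    using nn_integral_norm_nonlocal_hat_le[OF K_meas decay int]
    unfolding B(1) R_def[symmetric] L_def[symmetric] P_def[symmetric]
    by (elim order_trans) (intro add_mono mult_left_mono, auto)
  also have "\<dots> = ennreal (L * B + P * M * sqrt (H * W))"
    using P0 L0 B(2) M0 H(2) W(2)
    by (simp add: ennreal_mult[symmetric] ennreal_plus[symmetric] del: ennreal_plus)
  finally have hat_int: "(\<integral>\<^sup>+\<xi>. ennreal (cmod (nonlocal_hat K \<rho> \<xi>)) \<partial>lborel)
      \<le> ennreal (L * B + P * M * sqrt (H * W))" .
  have "cmod (nonlocal K \<rho> x) \<le> c * enn2real (\<integral>\<^sup>+\<xi>. ennreal (cmod (nonlocal_hat K \<rho> \<xi>)) \<partial>lborel)"
    unfolding nonlocal_def c_def by (intro norm_inv_fourier_le) measurable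
  also have "\<dots> \<le> c * (L * B + P * M * sqrt (H * W))"
    using c0 P0 L0 B(2) M0 H(2) W(2) enn2real_mono[OF hat_int]
    by (intro mult_left_mono) (simp_all del: ennreal_plus)
  also have "\<dots> = L * B * c + M * sqrt W * sqrt H"
    using cP by (simp add: real_sqrt_mult algebra_simps)
  also have "\<dots> \<le> (c * B + M * sqrt W) * (sqrt H + L)"
    using c0 L0 B(2) M0 H(2) W(2) by (simp add: algebra_simps)
  finally show ?thesis unfolding c_def L_def .
qed

lemma esssup_nonlocal_le:
  fixes K :: "real^'n::finite \<Rightarrow> complex" and s M :: real
  assumes K_meas [measurable]: "K \<in> borel_measurable lborel"
    and decay: "\<And>\<xi>. (norm \<xi>)\<^sup>2 * cmod (K \<xi>) \<le> M"
    and near_origin: "(\<integral>\<^sup>+\<xi>. indicator (ball 0 1) \<xi> * ennreal (cmod (K \<xi>)) \<partial>lborel) < \<infinity>"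
    and dim_less: "real CARD('n) < 2 * s"
  shows "\<exists>C. \<forall>\<rho>. in_Hs_L1 s \<rho> \<longrightarrow>
    esssup lborel (\<lambda>x. ereal (cmod (nonlocal K \<rho> x)))
      \<le> ereal (C * (enn2real (Hs_norm s \<rho>) + enn2real (L1_norm \<rho>)))"
proof -
  define B where "B = enn2real (\<integral>\<^sup>+\<xi>. indicator (ball 0 1) \<xi> * ennreal (cmod (K \<xi>)) \<partial>lborel)"
  define W where "W = enn2real (\<integral>\<^sup>+\<xi>. ennreal ((1 + (norm \<xi>)\<^sup>2) powr (-s)) \<partial>(lborel::(real^'n) measure))"
  have B: "(\<integral>\<^sup>+\<xi>. indicator (ball 0 1) \<xi> * ennreal (cmod (K \<xi>)) \<partial>lborel) = ennreal B" "B \<ge> 0"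
    using near_origin unfolding B_def by (auto simp: less_top)
  have W: "(\<integral>\<^sup>+\<xi>. ennreal ((1 + (norm \<xi>)\<^sup>2) powr (-s)) \<partial>(lborel::(real^'n) measure)) = ennreal W" "W \<ge> 0"
    using nn_integral_sobolev_weight_less_top[where 'a="real^'n"] dim_less unfolding W_def
    by (auto simp: less_top)
  show ?thesis
  proof (intro exI[of _ "(2*pi) powr (- real CARD('n) / 2) * B + M * sqrt W"] allI impI)
    fix \<rho> :: "real^'n \<Rightarrow> real"
    assume \<rho>: "in_Hs_L1 s \<rho>"
    have int: "integrable lborel \<rho>" using \<rho> unfolding in_Hs_L1_def by simp
    obtain H where H: "H \<ge> 0" "sobolevF_sq s (fourier (\<lambda>x. complex_of_real (\<rho> x))) = ennreal H"
      "Hs_norm s \<rho> = ennreal (sqrt H)"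
      using in_Hs_L1E[OF \<rho>] by blast
    have "\<rho> \<in> borel_measurable lborel" using int by (simp add: borel_measurable_integrable)
    then have "(\<lambda>x. ereal (cmod (nonlocal K \<rho> x))) \<in> borel_measurable lborel"
      unfolding nonlocal_def by measurable
    moreover have "enn2real (Hs_norm s \<rho>) = sqrt H" "enn2real (L1_norm \<rho>) = (\<integral>x. \<bar>\<rho> x\<bar> \<partial>lborel)"
      using H(1,3) L1_norm_eq_integral[OF int] by simp_all
    ultimately show "esssup lborel (\<lambda>x. ereal (cmod (nonlocal K \<rho> x)))
        \<le> ereal (((2*pi) powr (- real CARD('n) / 2) * B + M * sqrt W) * (enn2real (Hs_norm s \<rho>) + enn2real (L1_norm \<rho>)))"
      using norm_nonlocal_le[OF K_meas decay int B W H(2,1)] by (intro esssup_I) auto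
  qed
qed

theorem mainTheorem8:
  fixes Khat :: "real^'n::finite \<Rightarrow> complex" and s :: real
  assumes Khat_meas: "Khat \<in> borel_measurable lborel"
    and hK_low: "CARD('n) \<le> 2 \<Longrightarrow> (\<exists>M. \<forall>\<xi>. (1 + (norm \<xi>)\<^sup>2) * cmod (Khat \<xi>) \<le> M)"
    and hK_high: "CARD('n) \<ge> 3 \<Longrightarrow> (\<exists>M. \<forall>\<xi>. (norm \<xi>)\<^sup>2 * cmod (Khat \<xi>) \<le> M)"
    and s_nonneg: "s \<ge> 0"
  shows "(\<exists>C::real. \<forall>\<rho>. in_Hs_L1 s \<rho> \<longrightarrow>
            grad_nonlocal_Hs_norm (s + 1) Khat \<rho> \<le> ennreal C * (Hs_norm s \<rho> + L1_norm \<rho>))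
       \<and> (s > real CARD('n) / 2 \<longrightarrow>
            (\<exists>C::real. \<forall>\<rho>. in_Hs_L1 s \<rho> \<longrightarrow>
               esssup lborel (\<lambda>x. ereal (cmod (nonlocal Khat \<rho> x)))
                 \<le> ereal (C * (enn2real (Hs_norm s \<rho>) + enn2real (L1_norm \<rho>)))))"
proof -
  obtain M where decay: "\<And>\<xi>. (norm \<xi>)\<^sup>2 * cmod (Khat \<xi>) \<le> M"
    using ex_norm_sq_mult_kernel_bound[OF hK_low hK_high] by blast
  have near_origin: "(\<integral>\<^sup>+\<xi>. indicator (ball 0 1) \<xi> * ennreal (cmod (Khat \<xi>)) \<partial>lborel) < \<infinity>"
    by (rule kernel_nn_integral_ball_less_top[OF Khat_meas hK_low hK_high])
  show ?thesis
    using grad_nonlocal_Hs_norm_le[OF Khat_meas decay near_origin s_nonneg]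
      esssup_nonlocal_le[OF Khat_meas decay near_origin]
    by auto
qed

end
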